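(* Let $f:\mathbb{R}^n\to\mathbb{R}\cup\{+\infty\}$ be closed and convex, let $X\in\mathbb{R}^{n\times m}$ have rank $r$ with compact SVD $X=U_r\Sigma_r V_r^\top$ ($U_r\in\mathbb{R}^{n\times r}$, $\Sigma_r\in\mathbb{R}^{r\times r}$, $V_r\in\mathbb{R}^{m\times r}$), let $\gamma>0$ and $k\ge 0$. For an integer $q\ge 0$ define $$p_{\rm con}(q)=\min_{w\in\mathbb{R}^m,\ \|w\|_0\le q}\ f(Xw)+\tfrac{\gamma}{2}\|w\|_2^2,$$ and define the relaxation $$p^{**}_{\rm con}(k)=\min_{v\in\mathbb{R}^m,\ u\in[0,1]^m,\ \mathbf 1^\top u\le k}\ f(XD(u)v)+\tfrac{\gamma}{2}v^\top D(u)v .$$ Let $(v^*,u^* )$ be an optimal solution of this relaxation with optimal value $t^*$, let $z^*=\Sigma_rV_r^\top D(u^* )v^*\in\mathbb{R}^r$, let $\ell_i$ denote the $i$-th column of $\Sigma_rV_r^\top$, and let $c\sim\mathcal N(0,I_m)$. Consider the linear program in $u\in\mathbb{R}^m$: $$\min\ c^\top u\quad\text{s.t.}\quad f(U_rz^* )+\sum_{i=1}^m u_i\tfrac{\gamma}{2}(v_i^* )^2=t^*,\quad \sum_{i=1}^m u_i\le k,\quad \sum_{i=1}^m u_i\ell_i v_i^*=z^*,\quad u\in[0,1]^m.$$ Then, with probability one (over $c$), from an optimal basic feasible solution $\bar u$ of this linear program one can construct the point $w=D(\bar u)v^*$ (equivalently, with $S=\{i:\bar u_i\notin\{0,1\}\}$,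 set $\tilde u_i=1,\tilde v_i=\bar u_iv_i^*$ for $i\in S$ and $\tilde u_i=\bar u_i,\tilde v_i=v_i^*$ for $i\notin S$, and $w=D(\tilde u)\tilde v$), which has at most $k+r+2$ nonzero coefficients, and whose objective value $\mathrm{OPT}=f(Xw)+\tfrac{\gamma}{2}\|w\|_2^2$ satisfies $$p_{\rm con}(k+r+2)\le \mathrm{OPT}\le p^{**}_{\rm con}(k)\le p_{\rm con}(k).$$
   Context: $\|w\|_0$ denotes the number of nonzero entries of $w$. For $u\in\mathbb{R}^m$, $D(u)=\mathrm{diag}(u_1,\dots,u_m)$. $\mathbf 1$ is the all-ones vector. A function is closed if it is lower semicontinuous (its epigraph is closed). *)

theory Defs
  imports "HOL-Probability.Probability"
begin

definition Dg :: "real^'m \<Rightarrow> real^'m \<Rightarrow> real^'m" where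
  "Dg u v = (\<chi> i. u $ i * v $ i)"

definition l0norm :: "real^'m \<Rightarrow> nat" where
  "l0norm w = card {i. w $ i \<noteq> 0}"

definition closed_fun :: "(real^'n \<Rightarrow> ereal) \<Rightarrow> bool" where
  "closed_fun f \<longleftrightarrow> closed {p :: (real^'n) \<times> real. f (fst p) \<le> ereal (snd p)}"

definition convex_fun :: "(real^'n \<Rightarrow> ereal) \<Rightarrow> bool" where
  "convex_fun f \<longleftrightarrow> convex {p :: (real^'n) \<times> real. f (fst p) \<le> ereal (snd p)}"

definition con_obj :: "(real^'n \<Rightarrow> ereal) \<Rightarrow> real^'m^'n \<Rightarrow> real \<Rightarrow> real^'m \<Rightarrow> ereal" where
  "con_obj f X \<gamma> w = f (X *v w) + ereal (\<gamma> / 2 * (norm w)\<^sup>2)"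

definition p_con :: "(real^'n \<Rightarrow> ereal) \<Rightarrow> real^'m^'n \<Rightarrow> real \<Rightarrow> nat \<Rightarrow> ereal" where
  "p_con f X \<gamma> q = (INF w \<in> {w. l0norm w \<le> q}. con_obj f X \<gamma> w)"

definition relax_obj :: "(real^'n \<Rightarrow> ereal) \<Rightarrow> real^'m^'n \<Rightarrow> real \<Rightarrow> real^'m \<Rightarrow> real^'m \<Rightarrow> ereal" where
  "relax_obj f X \<gamma> v u = f (X *v Dg u v) + ereal (\<gamma> / 2 * (v \<bullet> Dg u v))"

definition relax_feasible :: "nat \<Rightarrow> real^'m \<Rightarrow> bool" where
  "relax_feasible k u \<longleftrightarrow> (\<forall>i. 0 \<le> u $ i \<and> u $ i \<le> 1) \<and> (\<Sum>i\<in>UNIV. u $ i) \<le> real k"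

definition p_relax :: "(real^'n \<Rightarrow> ereal) \<Rightarrow> real^'m^'n \<Rightarrow> real \<Rightarrow> nat \<Rightarrow> ereal" where
  "p_relax f X \<gamma> k = (INF vu \<in> {(v, u). relax_feasible k u}. relax_obj f X \<gamma> (fst vu) (snd vu))"

definition lp_feasible :: "('a::real_inner \<times> real) set \<Rightarrow> ('a \<times> real) set \<Rightarrow> 'a \<Rightarrow> bool" where
  "lp_feasible E I x \<longleftrightarrow> (\<forall>(a, b) \<in> E. a \<bullet> x = b) \<and> (\<forall>(a, b) \<in> I. a \<bullet> x \<le> b)"

definition basic_feasible_solution :: "('a::euclidean_space \<times> real) set \<Rightarrow> ('a \<times> real) set \<Rightarrow> 'a \<Rightarrow> bool" where
  "basic_feasible_solution E I x \<longleftrightarrow> lp_feasible E I x \<and>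
     span ({a. \<exists>b. (a, b) \<in> E} \<union> {a. \<exists>b. (a, b) \<in> I \<and> a \<bullet> x = b}) = UNIV"

definition lp_optimal :: "'a::real_inner \<Rightarrow> ('a \<times> real) set \<Rightarrow> ('a \<times> real) set \<Rightarrow> 'a \<Rightarrow> bool" where
  "lp_optimal c E I x \<longleftrightarrow> lp_feasible E I x \<and> (\<forall>y. lp_feasible E I y \<longrightarrow> c \<bullet> x \<le> c \<bullet> y)"

text \<open>z* = Sigma_r V_r^T D(u*) v*, with columns of V_r given by V 0, ..., V (r-1)
  and singular values sigma 0, ..., sigma (r-1); z* is represented as a function on {..<r}.\<close>
definition zstar :: "(nat \<Rightarrow> real) \<Rightarrow> (nat \<Rightarrow> real^'m) \<Rightarrow> real^'m \<Rightarrow> real^'m \<Rightarrow> nat \<Rightarrow> real" where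
  "zstar \<sigma> V us vs j = \<sigma> j * (V j \<bullet> Dg us vs)"

definition Ur_apply :: "nat \<Rightarrow> (nat \<Rightarrow> real^'n) \<Rightarrow> (nat \<Rightarrow> real) \<Rightarrow> real^'n" where
  "Ur_apply r U z = (\<Sum>j<r. z j *\<^sub>R U j)"

text \<open>Equality constraints: the objective-value constraint
  (only present when f(U_r z*) is finite; otherwise it reads +oo = +oo and is vacuous) and the
  r constraints sum_i u_i l_i v*_i = z*, where (l_i)_j = sigma_j (V_j)_i.\<close>
definition lp_eqs :: "(real^'n \<Rightarrow> ereal) \<Rightarrow> real \<Rightarrow> nat \<Rightarrow> (nat \<Rightarrow> real^'n) \<Rightarrow> (nat \<Rightarrow> real)
    \<Rightarrow> (nat \<Rightarrow> real^'m) \<Rightarrow> real^'m \<Rightarrow> real^'m \<Rightarrow> ereal \<Rightarrow> ((real^'m) \<times> real) set" where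
  "lp_eqs f \<gamma> r U \<sigma> V vs us ts =
     (if f (Ur_apply r U (zstar \<sigma> V us vs)) = \<infinity> then {}
      else {((\<chi> i. \<gamma> / 2 * (vs $ i)\<^sup>2),
             real_of_ereal ts - real_of_ereal (f (Ur_apply r U (zstar \<sigma> V us vs))))})
     \<union> {((\<chi> i. \<sigma> j * V j $ i * vs $ i), zstar \<sigma> V us vs j) | j. j < r}"

definition lp_ineqs :: "nat \<Rightarrow> ((real^'m) \<times> real) set" where
  "lp_ineqs k = {((\<chi> i. 1), real k)} \<union> {(axis i 1, 1) | i. True} \<union> {(- axis i 1, 0) | i. True}"

definition std_gauss :: "(real^'m) measure" where
  "std_gauss = density lborel (\<lambda>c. ennreal (\<Prod>i\<in>UNIV. std_normal_density (c $ i)))"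

definition u_tilde :: "real^'m \<Rightarrow> real^'m" where
  "u_tilde ub = (\<chi> i. if ub $ i = 0 \<or> ub $ i = 1 then ub $ i else 1)"

definition v_tilde :: "real^'m \<Rightarrow> real^'m \<Rightarrow> real^'m" where
  "v_tilde ub vs = (\<chi> i. if ub $ i = 0 \<or> ub $ i = 1 then vs $ i else ub $ i * vs $ i)"

end

theory Submission
  imports Defs
begin

text \<open>Through the SVD, \<open>X D(u) v\<^sup>* = U\<^sub>r z(u)\<close> with \<open>z(u) = \<Sum>\<^sub>i u\<^sub>i \<ell>\<^sub>i v\<^sup>*\<^sub>i\<close>, so the
  equality constraints of the linear program fix \<open>X D(u) v\<^sup>*\<close> and the linear term
  \<open>\<Sum>\<^sub>i u\<^sub>i \<gamma>/2 (v\<^sup>*\<^sub>i)\<^sup>2\<close> at their values for \<open>u\<^sup>*\<close>; since \<open>u\<^sub>i\<^sup>2 \<le> u\<^sub>i\<close> on \<open>[0,1]\<close>, the point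
  \<open>w = D(u) v\<^sup>*\<close> of any feasible \<open>u\<close> then has objective at most \<open>t\<^sup>*\<close>.  At a basic feasible
  solution the active constraints span \<open>\<real>\<^sup>m\<close>; at most \<open>r + 2\<close> of them are not bounds
  \<open>u\<^sub>i \<in> {0, 1}\<close>, so at most \<open>r + 2\<close> coordinates are fractional, and at most \<open>k\<close> equal \<open>1\<close>.
  No genericity of \<open>c\<close> is needed: the conclusion holds for every \<open>c\<close>, and of the hypotheses
  only the factorisation of \<open>X\<close>, \<open>\<gamma> > 0\<close> and \<open>t\<^sup>*\<close> being the relaxed objective at
  \<open>(v\<^sup>*, u\<^sup>*)\<close> are used.\<close>

lemma Dg_u_tilde_v_tilde: "Dg (u_tilde u) (v_tilde u v) = Dg u v"
  by (simp add: Dg_def u_tilde_def v_tilde_def vec_eq_iff)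

lemma norm_Dg_squared_le:
  assumes "\<forall>i. 0 \<le> u $ i \<and> u $ i \<le> 1"
  shows "(norm (Dg u v))\<^sup>2 \<le> v \<bullet> Dg u v"
proof -
  have "(norm (Dg u v))\<^sup>2 = (\<Sum>i\<in>UNIV. (u $ i)\<^sup>2 * (v $ i)\<^sup>2)"
    unfolding power2_norm_eq_inner by (simp add: inner_vec_def Dg_def power2_eq_square algebra_simps)
  also have "\<dots> \<le> (\<Sum>i\<in>UNIV. u $ i * (v $ i)\<^sup>2)"
  proof (rule sum_mono)
    fix i
    have "(u $ i)\<^sup>2 \<le> u $ i"
      using assms by (simp add: power2_eq_square mult_left_le)
    then show "(u $ i)\<^sup>2 * (v $ i)\<^sup>2 \<le> u $ i * (v $ i)\<^sup>2"
      by (rule mult_right_mono) simp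
  qed
  also have "\<dots> = v \<bullet> Dg u v"
    by (simp add: inner_vec_def Dg_def power2_eq_square algebra_simps)
  finally show ?thesis .
qed

lemma card_eq_one_le:
  assumes "relax_feasible k u"
  shows "card {i. u $ i = 1} \<le> k"
proof -
  have "real (card {i. u $ i = 1}) = (\<Sum>i\<in>{i. u $ i = 1}. u $ i)"
    by simp
  also have "\<dots> \<le> (\<Sum>i\<in>UNIV. u $ i)"
    using assms by (intro sum_mono2) (auto simp: relax_feasible_def)
  also have "\<dots> \<le> real k"
    using assms by (simp add: relax_feasible_def)
  finally show ?thesis by simp
qed

lemma l0norm_Dg_le:
  assumes "relax_feasible k u"
  shows "l0norm (Dg u v) \<le> k + card {i. u $ i \<noteq> 0 \<and> u $ i \<noteq> 1}"
proof -
  have "card {i. Dg u v $ i \<noteq> 0} \<le> card ({i. u $ i = 1} \<union> {i. u $ i \<noteq> 0 \<and> u $ i \<noteq> 1})"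
    by (intro card_mono) (auto simp: Dg_def)
  also have "\<dots> \<le> card {i. u $ i = 1} + card {i. u $ i \<noteq> 0 \<and> u $ i \<noteq> 1}"
    by (rule card_Un_le)
  finally show ?thesis
    using card_eq_one_le[OF assms] by (simp add: l0norm_def)
qed

lemma p_relax_le_p_con:
  fixes X :: "real^'m^'n"
  shows "p_relax f X \<gamma> k \<le> p_con f X \<gamma> k"
  unfolding p_con_def
proof (rule INF_greatest)
  fix w :: "real^'m"
  assume "w \<in> {w. l0norm w \<le> k}"
  then have "card {i. w $ i \<noteq> 0} \<le> k"
    by (simp add: l0norm_def)
  define u :: "real^'m" where "u = (\<chi> i. if w $ i = 0 then 0 else 1)"
  have "(\<Sum>i\<in>UNIV. u $ i) = real (card {i. w $ i \<noteq> 0})"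
    by (simp add: u_def sum.If_cases) (simp add: Collect_neg_eq)
  with \<open>card {i. w $ i \<noteq> 0} \<le> k\<close> have "relax_feasible k u"
    by (simp add: relax_feasible_def u_def)
  then have "p_relax f X \<gamma> k \<le> relax_obj f X \<gamma> w u"
    unfolding p_relax_def by (intro INF_lower2[where i = "(w, u)"]) auto
  also have "Dg u w = w"
    by (simp add: Dg_def u_def vec_eq_iff)
  then have "relax_obj f X \<gamma> w u = con_obj f X \<gamma> w"
    by (simp add: relax_obj_def con_obj_def power2_norm_eq_inner)
  finally show "p_relax f X \<gamma> k \<le> con_obj f X \<gamma> w" .
qed

lemma lp_ineqs_feasible_iff: "(\<forall>(a, b) \<in> lp_ineqs k. a \<bullet> u \<le> b) \<longleftrightarrow> relax_feasible k u"
proof -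
  have "(\<forall>(a, b) \<in> lp_ineqs k. a \<bullet> u \<le> b) \<longleftrightarrow>
      (\<chi> i. 1) \<bullet> u \<le> real k \<and> (\<forall>i. axis i 1 \<bullet> u \<le> 1) \<and> (\<forall>i. - axis i 1 \<bullet> u \<le> 0)"
    unfolding lp_ineqs_def by blast
  moreover have "(\<chi> i. 1) \<bullet> u = (\<Sum>i\<in>UNIV. u $ i)"
    by (simp add: inner_vec_def)
  ultimately show ?thesis
    by (auto simp: relax_feasible_def inner_axis')
qed

lemma lp_ineqs_active_subset_span:
  "{a. \<exists>b. (a, b) \<in> lp_ineqs k \<and> a \<bullet> u = b}
     \<subseteq> span (insert (\<chi> i. 1) ((\<lambda>i. axis i 1) ` {i. u $ i = 0 \<or> u $ i = 1}))"
    (is "_ \<subseteq> span ?B")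
proof -
  have "axis i 1 \<in> span ?B" if "u $ i = 0 \<or> u $ i = 1" for i
    using that by (intro span_base) auto
  then have "axis i 1 \<in> span ?B" "- axis i 1 \<in> span ?B" if "u $ i = 0 \<or> u $ i = 1" for i
    using that span_neg by blast+
  then show ?thesis
    by (auto simp: lp_ineqs_def inner_axis' intro: span_base)
qed

lemma card_fractional_le_if_basic_feasible_solution:
  fixes u :: "real^'m"
  assumes bfs: "basic_feasible_solution E (lp_ineqs k) u" and "finite E" and "card E \<le> e"
  shows "card {i. u $ i \<noteq> 0 \<and> u $ i \<noteq> 1} \<le> e + 1"
proof -
  define F where "F = {i. u $ i \<noteq> 0 \<and> u $ i \<noteq> 1}"
  define B :: "(real^'m) set" where "B = insert (\<chi> i. 1) ((\<lambda>i. axis i 1) ` (- F))"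
  have "- F = {i. u $ i = 0 \<or> u $ i = 1}"
    by (auto simp: F_def)
  then have "{a. \<exists>b. (a, b) \<in> lp_ineqs k \<and> a \<bullet> u = b} \<subseteq> span B"
    using lp_ineqs_active_subset_span[of k u] by (simp add: B_def)
  also have "span B \<subseteq> span (fst ` E \<union> B)"
    by (rule span_mono) simp
  finally have "{a. \<exists>b. (a, b) \<in> E} \<union> {a. \<exists>b. (a, b) \<in> lp_ineqs k \<and> a \<bullet> u = b}
      \<subseteq> span (fst ` E \<union> B)"
    using span_superset[of "fst ` E \<union> B"] by force
  then have "UNIV \<subseteq> span (fst ` E \<union> B)"
    using bfs span_minimal[OF _ subspace_span] unfolding basic_feasible_solution_def by blast
  then have "dim (UNIV :: (real^'m) set) \<le> card (fst ` E \<union> B)"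
    by (rule dim_le_card) (simp add: B_def \<open>finite E\<close>)
  then have "CARD('m) \<le> card (fst ` E \<union> B)"
    by simp
  also have "\<dots> \<le> card (fst ` E) + card B"
    by (rule card_Un_le)
  also have "\<dots> \<le> e + (card (- F) + 1)"
    using card_image_le[OF \<open>finite E\<close>, of fst] \<open>card E \<le> e\<close>
      card_image_le[of "- F" "\<lambda>i. axis i 1 :: real^'m"]
    by (intro add_mono) (auto simp: B_def card_insert_if)
  also have "card (- F) = CARD('m) - card F"
    by (simp add: Compl_eq_Diff_UNIV card_Diff_subset)
  finally show ?thesis
    using card_mono[of UNIV F] unfolding F_def by simp
qed

lemma
  fixes u v :: "real^'m"
  shows finite_lp_eqs: "finite (lp_eqs f \<gamma> r U \<sigma> V v u t)"
    and card_lp_eqs_le: "card (lp_eqs f \<gamma> r U \<sigma> V v u t) \<le> r + 1"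
proof -
  define h where "h j = ((\<chi> i. \<sigma> j * V j $ i * v $ i), zstar \<sigma> V u v j)" for j
  define E\<^sub>0 :: "((real^'m) \<times> real) set"
    where "E\<^sub>0 = (if f (Ur_apply r U (zstar \<sigma> V u v)) = \<infinity> then {}
      else {((\<chi> i. \<gamma> / 2 * (v $ i)\<^sup>2),
             real_of_ereal t - real_of_ereal (f (Ur_apply r U (zstar \<sigma> V u v))))})"
  have "lp_eqs f \<gamma> r U \<sigma> V v u t = E\<^sub>0 \<union> h ` {..<r}"
    unfolding lp_eqs_def E\<^sub>0_def h_def by auto
  moreover have "finite E\<^sub>0" "card E\<^sub>0 \<le> 1"
    by (simp_all add: E\<^sub>0_def)
  ultimately show "finite (lp_eqs f \<gamma> r U \<sigma> V v u t)"
    and "card (lp_eqs f \<gamma> r U \<sigma> V v u t) \<le> r + 1"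
    using card_Un_le[of E\<^sub>0 "h ` {..<r}"] card_image_le[of "{..<r}" h] by simp_all
qed

lemma svd_mult_Dg:
  assumes "X = (\<chi> i j. \<Sum>l<r. \<sigma> l * U l $ i * V l $ j)"
  shows "X *v Dg u v = Ur_apply r U (zstar \<sigma> V u v)"
proof -
  have "(X *v Dg u v) $ i = (\<Sum>j\<in>UNIV. \<Sum>l<r. \<sigma> l * U l $ i * V l $ j * Dg u v $ j)" for i
    by (simp add: assms matrix_vector_mult_def sum_distrib_right)
  also have "\<dots> i = (\<Sum>l<r. \<Sum>j\<in>UNIV. \<sigma> l * U l $ i * V l $ j * Dg u v $ j)" for i
    by (rule sum.swap)
  also have "\<dots> i = Ur_apply r U (zstar \<sigma> V u v) $ i" for i
    by (simp add: Ur_apply_def zstar_def inner_vec_def sum_distrib_left sum_component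
        algebra_simps)
  finally show ?thesis
    by (simp add: vec_eq_iff)
qed

lemma zstar_eq_if_lp_eqs:
  assumes "\<forall>(a, b) \<in> lp_eqs f \<gamma> r U \<sigma> V v u t. a \<bullet> w = b" and "j < r"
  shows "zstar \<sigma> V w v j = zstar \<sigma> V u v j"
proof -
  have "((\<chi> i. \<sigma> j * V j $ i * v $ i), zstar \<sigma> V u v j) \<in> lp_eqs f \<gamma> r U \<sigma> V v u t"
    using \<open>j < r\<close> by (auto simp: lp_eqs_def)
  with assms(1) have "(\<chi> i. \<sigma> j * V j $ i * v $ i) \<bullet> w = zstar \<sigma> V u v j"
    by fastforce
  then show ?thesis
    by (simp add: zstar_def inner_vec_def Dg_def sum_distrib_left algebra_simps)
qed

lemma con_obj_Dg_le_relax_obj: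
  fixes X :: "real^'m^'n" and u v w :: "real^'m"
  assumes svd: "X = (\<chi> i j. \<Sum>l<r. \<sigma> l * U l $ i * V l $ j)"
    and "\<gamma> \<ge> 0" and w_unit: "\<forall>i. 0 \<le> w $ i \<and> w $ i \<le> 1"
    and w_eqs: "\<forall>(a, b) \<in> lp_eqs f \<gamma> r U \<sigma> V v u (relax_obj f X \<gamma> v u). a \<bullet> w = b"
  shows "con_obj f X \<gamma> (Dg w v) \<le> relax_obj f X \<gamma> v u"
proof -
  define y where "y = Ur_apply r U (zstar \<sigma> V u v)"
  have "X *v Dg w v = y"
    using zstar_eq_if_lp_eqs[OF w_eqs] by (simp add: svd_mult_Dg[OF svd] y_def Ur_apply_def)
  moreover have "X *v Dg u v = y"
    by (simp add: svd_mult_Dg[OF svd] y_def)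
  ultimately have
    con_obj_w: "con_obj f X \<gamma> (Dg w v) = f y + ereal (\<gamma> / 2 * (norm (Dg w v))\<^sup>2)"
    and relax_obj_u: "relax_obj f X \<gamma> v u = f y + ereal (\<gamma> / 2 * (v \<bullet> Dg u v))"
    by (simp_all add: con_obj_def relax_obj_def)
  consider "f y = \<infinity>" | "f y = - \<infinity>" | a where "f y = ereal a"
    by (cases "f y") auto
  then show ?thesis
  proof cases
    case (3 a)
    have "((\<chi> i. \<gamma> / 2 * (v $ i)\<^sup>2), \<gamma> / 2 * (v \<bullet> Dg u v))
        \<in> lp_eqs f \<gamma> r U \<sigma> V v u (relax_obj f X \<gamma> v u)"
      using 3 by (simp add: lp_eqs_def relax_obj_u y_def)
    with w_eqs have "(\<chi> i. \<gamma> / 2 * (v $ i)\<^sup>2) \<bullet> w = \<gamma> / 2 * (v \<bullet> Dg u v)"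
      by fastforce
    moreover have "(\<chi> i. \<gamma> / 2 * (v $ i)\<^sup>2) \<bullet> w = \<gamma> / 2 * (v \<bullet> Dg w v)"
      by (simp add: inner_vec_def Dg_def sum_distrib_left power2_eq_square algebra_simps)
    moreover have "\<gamma> / 2 * (norm (Dg w v))\<^sup>2 \<le> \<gamma> / 2 * (v \<bullet> Dg w v)"
      using norm_Dg_squared_le[OF w_unit] \<open>\<gamma> \<ge> 0\<close> by (simp add: mult_left_mono)
    ultimately have "\<gamma> / 2 * (norm (Dg w v))\<^sup>2 \<le> \<gamma> / 2 * (v \<bullet> Dg u v)"
      by linarith
    then show ?thesis
      by (simp add: con_obj_w relax_obj_u 3)
  qed (simp_all add: con_obj_w relax_obj_u)
qed

theorem theorem2p1:
  fixes f :: "real^'n \<Rightarrow> ereal" and X :: "real^'m^'n"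
    and r :: nat and U :: "nat \<Rightarrow> real^'n" and \<sigma> :: "nat \<Rightarrow> real" and V :: "nat \<Rightarrow> real^'m"
    and \<gamma> :: real and k :: nat and vs us :: "real^'m"
  assumes f_convex: "convex_fun f" and f_closed: "closed_fun f"
    and f_values: "\<forall>x. f x \<noteq> -\<infinity>"
    and rank_X: "rank X = r"
    and svd: "X = (\<chi> i j. \<Sum>l<r. \<sigma> l * U l $ i * V l $ j)"
    and U_orth: "\<forall>a<r. \<forall>b<r. U a \<bullet> U b = (if a = b then 1 else 0)"
    and V_orth: "\<forall>a<r. \<forall>b<r. V a \<bullet> V b = (if a = b then 1 else 0)"
    and \<sigma>_pos: "\<forall>l<r. \<sigma> l > 0"
    and \<gamma>_pos: "\<gamma> > 0"
    and opt_feas: "relax_feasible k us"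
    and opt_val: "relax_obj f X \<gamma> vs us = p_relax f X \<gamma> k"
  shows "AE c in std_gauss.
           \<forall>ub. lp_optimal c (lp_eqs f \<gamma> r U \<sigma> V vs us (p_relax f X \<gamma> k)) (lp_ineqs k) ub \<and>
                basic_feasible_solution (lp_eqs f \<gamma> r U \<sigma> V vs us (p_relax f X \<gamma> k)) (lp_ineqs k) ub
            \<longrightarrow> Dg ub vs = Dg (u_tilde ub) (v_tilde ub vs)
              \<and> l0norm (Dg ub vs) \<le> k + r + 2
              \<and> p_con f X \<gamma> (k + r + 2) \<le> con_obj f X \<gamma> (Dg ub vs)
              \<and> con_obj f X \<gamma> (Dg ub vs) \<le> p_relax f X \<gamma> k
              \<and> p_relax f X \<gamma> k \<le> p_con f X \<gamma> k"
proof (rule always_eventually, intro allI impI)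
  fix c ub :: "real^'m"
  define E where "E = lp_eqs f \<gamma> r U \<sigma> V vs us (p_relax f X \<gamma> k)"
  assume "lp_optimal c (lp_eqs f \<gamma> r U \<sigma> V vs us (p_relax f X \<gamma> k)) (lp_ineqs k) ub \<and>
    basic_feasible_solution (lp_eqs f \<gamma> r U \<sigma> V vs us (p_relax f X \<gamma> k)) (lp_ineqs k) ub"
  then have bfs: "basic_feasible_solution E (lp_ineqs k) ub"
    by (simp add: E_def)
  then have "lp_feasible E (lp_ineqs k) ub"
    by (simp add: basic_feasible_solution_def)
  then have eqs: "\<forall>(a, b) \<in> E. a \<bullet> ub = b" and feasible: "relax_feasible k ub"
    unfolding lp_feasible_def lp_ineqs_feasible_iff by simp_all
  have "card {i. ub $ i \<noteq> 0 \<and> ub $ i \<noteq> 1} \<le> (r + 1) + 1"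
    by (rule card_fractional_le_if_basic_feasible_solution[OF bfs])
      (simp_all only: E_def finite_lp_eqs card_lp_eqs_le)
  then have sparse: "l0norm (Dg ub vs) \<le> k + r + 2"
    using l0norm_Dg_le[OF feasible, of vs] by linarith
  then have "p_con f X \<gamma> (k + r + 2) \<le> con_obj f X \<gamma> (Dg ub vs)"
    unfolding p_con_def by (intro INF_lower) simp
  moreover have "con_obj f X \<gamma> (Dg ub vs) \<le> relax_obj f X \<gamma> vs us"
  proof (rule con_obj_Dg_le_relax_obj[OF svd])
    show "\<gamma> \<ge> 0" "\<forall>i. 0 \<le> ub $ i \<and> ub $ i \<le> 1"
      using \<gamma>_pos feasible by (simp_all add: relax_feasible_def)
    show "\<forall>(a, b) \<in> lp_eqs f \<gamma> r U \<sigma> V vs us (relax_obj f X \<gamma> vs us). a \<bullet> ub = b"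
      using eqs by (simp only: E_def opt_val)
  qed
  ultimately show "Dg ub vs = Dg (u_tilde ub) (v_tilde ub vs)
      \<and> l0norm (Dg ub vs) \<le> k + r + 2
      \<and> p_con f X \<gamma> (k + r + 2) \<le> con_obj f X \<gamma> (Dg ub vs)
      \<and> con_obj f X \<gamma> (Dg ub vs) \<le> p_relax f X \<gamma> k
      \<and> p_relax f X \<gamma> k \<le> p_con f X \<gamma> k"
    using sparse Dg_u_tilde_v_tilde[of ub vs] p_relax_le_p_con[of f X \<gamma> k] opt_val by simp
qed

end
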